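(* Let $\alpha>0$ and $M>1$ be real numbers, and let $x\in[0,M]$. For $n\in\mathbb N$ define $$C_{\alpha,n}(M;x)=\sum_{k=0}^{\lfloor M\rfloor}f_n(k),\qquad f_n(t)=\begin{cases}0 & \text{if } t=0 \text{ or } x=0,\\ t^\alpha\cos^{2n}(\pi x/t) & \text{otherwise}.\end{cases}$$ Then the sequence $n\mapsto C_{\alpha,n}(M;x)$ is non-increasing and $\lim_{n\to\infty}C_{\alpha,n}(M;x)=\sigma_\alpha(x)$.
   Context: For $m\in\mathbb N$, $\sigma_\alpha(m)=\sum_{k\mid m}k^\alpha$ (sum over positive divisors $k$ of $m$), and $\sigma_\alpha$ is extended to $[0,\infty)$ by setting $\sigma_\alpha(x)=0$ for $x\in[0,\infty)\setminus\mathbb N$. The sum over $k$ runs over integers $0\le k\le\lfloor M\rfloor$. *)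

theory Defs
  imports "HOL-Analysis.Analysis"
begin

definition sigma_ext :: "real \<Rightarrow> real \<Rightarrow> real" where
  "sigma_ext \<alpha> x =
     (if \<exists>m::nat. m \<ge> 1 \<and> x = real m
      then (\<Sum>k\<in>{k::nat. k dvd (nat \<lfloor>x\<rfloor>)}. real k powr \<alpha>)
      else 0)"

definition f_term :: "real \<Rightarrow> nat \<Rightarrow> real \<Rightarrow> real \<Rightarrow> real" where
  "f_term \<alpha> n x t = (if t = 0 \<or> x = 0 then 0 else t powr \<alpha> * (cos (pi * x / t)) ^ (2 * n))"

definition C_seq :: "real \<Rightarrow> nat \<Rightarrow> real \<Rightarrow> real \<Rightarrow> real" where
  "C_seq \<alpha> n M x = (\<Sum>k\<in>{0..nat \<lfloor>M\<rfloor>}. f_term \<alpha> n x (real k))"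

end

theory Submission
  imports Defs
begin

text \<open>For t \<noteq> 0 the summand f_n(t) equals t powr \<alpha> * q^n with q = cos (pi x / t)^2 \<in> [0, 1],
  so it is non-increasing in n and tends to t powr \<alpha> if q = 1, that is if x / t is an integer,
  and to 0 otherwise. The limit of the finite sum therefore keeps exactly the terms k powr \<alpha>
  with k a divisor of x, and every such k \<le> x \<le> M lies in the range of summation.\<close>

lemma LIMSEQ_power_unit_interval:
  fixes q :: real
  assumes "0 \<le> q" "q \<le> 1"
  shows "(\<lambda>n. q ^ n) \<longlonglongrightarrow> (if q = 1 then 1 else 0)"
proof (cases "q = 1")
  case False
  with assms have "norm q < 1" by simp
  with False show ?thesis by (simp add: LIMSEQ_power_zero)
qed simp

lemma cos_pi_power2_eq_1_iff: "cos (pi * z) ^ 2 = 1 \<longleftrightarrow> z \<in> \<int>"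
proof -
  have "cos (pi * z) ^ 2 = 1 \<longleftrightarrow> sin (z * pi) = 0"
    using sin_cos_squared_add[of "pi * z"] by (auto simp: power2_eq_square mult.commute)
  then show ?thesis by (simp add: sin_times_pi_eq_0)
qed

lemma real_of_nat_div_in_Ints_iff:
  assumes "k > 0"
  shows "real m / real k \<in> \<int> \<longleftrightarrow> k dvd m"
  using assms of_int_div_of_int_in_Ints_iff[of "int m" "int k", where ?'a = real] by simp

definition f_term_limit :: "real \<Rightarrow> real \<Rightarrow> real \<Rightarrow> real" where
  "f_term_limit \<alpha> x t = (if t \<noteq> 0 \<and> x \<noteq> 0 \<and> x / t \<in> \<int> then t powr \<alpha> else 0)"

lemma f_term_eq_power:
  "f_term \<alpha> n x t = (if t = 0 \<or> x = 0 then 0 else t powr \<alpha> * (cos (pi * (x / t)) ^ 2) ^ n)"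
  by (simp add: f_term_def power_mult)

lemma antimono_f_term: "antimono (\<lambda>n. f_term \<alpha> n x t)"
proof (rule antimonoI)
  fix m n :: nat
  assume "m \<le> n"
  then have "(cos (pi * (x / t)) ^ 2) ^ n \<le> (cos (pi * (x / t)) ^ 2) ^ m"
    by (intro power_decreasing) (auto simp: abs_square_le_1)
  then show "f_term \<alpha> n x t \<le> f_term \<alpha> m x t"
    by (simp add: f_term_eq_power mult_left_mono)
qed

lemma f_term_tendsto: "(\<lambda>n. f_term \<alpha> n x t) \<longlonglongrightarrow> f_term_limit \<alpha> x t"
proof (cases "t = 0 \<or> x = 0")
  case False
  define q where "q = cos (pi * (x / t)) ^ 2"
  have q_bounds: "0 \<le> q" "q \<le> 1"
    by (auto simp: q_def abs_square_le_1)
  have f_term_eq: "f_term \<alpha> n x t = t powr \<alpha> * q ^ n" for n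
    using False by (simp add: f_term_eq_power q_def)
  have "q = 1 \<longleftrightarrow> x / t \<in> \<int>"
    unfolding q_def by (rule cos_pi_power2_eq_1_iff)
  then have limit_eq: "f_term_limit \<alpha> x t = t powr \<alpha> * (if q = 1 then 1 else 0)"
    using False by (simp add: f_term_limit_def)
  show ?thesis
    unfolding f_term_eq limit_eq
    by (intro tendsto_mult tendsto_const LIMSEQ_power_unit_interval q_bounds)
qed (auto simp: f_term_def f_term_limit_def)

lemma sum_f_term_limit_eq_sigma_ext:
  assumes "0 \<le> x" "x \<le> M"
  shows "(\<Sum>k\<in>{0..nat \<lfloor>M\<rfloor>}. f_term_limit \<alpha> x (real k)) = sigma_ext \<alpha> x"
proof (cases "\<exists>m::nat. m \<ge> 1 \<and> x = real m")
  case True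
  then obtain m :: nat where m: "m \<ge> 1" "x = real m"
    by blast
  have "m \<le> nat \<lfloor>M\<rfloor>"
    using m assms by linarith
  have "(\<Sum>k\<in>{0..nat \<lfloor>M\<rfloor>}. f_term_limit \<alpha> x (real k))
      = (\<Sum>k\<in>{0..nat \<lfloor>M\<rfloor>}. if k \<noteq> 0 \<and> k dvd m then real k powr \<alpha> else 0)"
    using m by (intro sum.cong) (auto simp: f_term_limit_def real_of_nat_div_in_Ints_iff)
  also have "\<dots> = (\<Sum>k\<in>{k\<in>{0..nat \<lfloor>M\<rfloor>}. k \<noteq> 0 \<and> k dvd m}. real k powr \<alpha>)"
    by (rule sum.inter_filter[symmetric]) simp
  also have "{k\<in>{0..nat \<lfloor>M\<rfloor>}. k \<noteq> 0 \<and> k dvd m} = {k. k dvd m}"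
    using m \<open>m \<le> nat \<lfloor>M\<rfloor>\<close> by (auto dest: dvd_imp_le)
  finally show ?thesis
    using True m by (simp add: sigma_ext_def)
next
  case False
  have "f_term_limit \<alpha> x (real k) = 0" for k
  proof (rule ccontr)
    assume "f_term_limit \<alpha> x (real k) \<noteq> 0"
    then obtain j where j: "x / real k = of_int j" and "k > 0" "x \<noteq> 0"
      by (auto simp: f_term_limit_def elim!: Ints_cases split: if_splits)
    then have x_eq: "x = of_int j * real k"
      by (simp add: field_simps)
    with \<open>k > 0\<close> \<open>x \<noteq> 0\<close> assms(1) have "j > 0"
      by (auto simp: zero_le_mult_iff)
    with x_eq \<open>k > 0\<close> have "x = real (nat j * k)" and "nat j * k \<ge> 1"
      by auto
    with False show False
      by blast
  qed
  then show ?thesis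
    unfolding sigma_ext_def if_not_P[OF False] by simp
qed

theorem proposition2p1:
  fixes \<alpha> M x :: real
  assumes "\<alpha> > 0" and "M > 1" and "0 \<le> x" and "x \<le> M"
  shows "antimono (\<lambda>n. C_seq \<alpha> n M x) \<and> (\<lambda>n. C_seq \<alpha> n M x) \<longlonglongrightarrow> sigma_ext \<alpha> x"
proof
  show "antimono (\<lambda>n. C_seq \<alpha> n M x)"
    unfolding C_seq_def
    by (intro antimonoI sum_mono antimonoD[OF antimono_f_term])
  have "(\<lambda>n. C_seq \<alpha> n M x) \<longlonglongrightarrow> (\<Sum>k\<in>{0..nat \<lfloor>M\<rfloor>}. f_term_limit \<alpha> x (real k))"
    unfolding C_seq_def by (intro tendsto_sum f_term_tendsto)
  then show "(\<lambda>n. C_seq \<alpha> n M x) \<longlonglongrightarrow> sigma_ext \<alpha> x"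
    using assms(3,4) by (simp add: sum_f_term_limit_eq_sigma_ext)
qed

end
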